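(* Let $d$ be a positive integer and suppose that there is a function $\varepsilon:\mathbb{N}\to\mathbb{R}$ with $\varepsilon(N)\to0$ such that for every $d$--regular bipartite graph $G$ on $2n$ vertices and every $0\leq k\leq n$ one has $\frac{\ln m_k(G)}{v(G)}\geq\mathcal{G}_d(k/n)-\varepsilon(v(G))$. Then for every $d$--regular bipartite graph $G$ on $v(G)=2n$ vertices and every integer $0\leq k\leq n$, $$\frac{\ln m_k(G)}{v(G)}\geq\mathcal{G}_d(p)-\frac{\ln v(G)}{v(G)},\qquad p=\frac kn.$$
   Context: $m_k(G)$ is the number of matchings of size $k$ in $G$. $\mathcal{G}_d(p)=\frac{1}{2}\left(p\ln\frac{d}{p}+(d-p)\ln\left(1-\frac{p}{d}\right)-2(1-p)\ln(1-p)\right)$ for $0\leq p\leq1$, with $0\ln(\cdot)=0$. *)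

theory Defs
  imports Complex_Main
begin

definition simple_graph :: "'a set \<Rightarrow> 'a set set \<Rightarrow> bool" where
  "simple_graph V E \<longleftrightarrow> finite V \<and> (\<forall>e\<in>E. e \<subseteq> V \<and> card e = 2)"

definition degree :: "'a set set \<Rightarrow> 'a \<Rightarrow> nat" where
  "degree E v = card {e\<in>E. v \<in> e}"

definition regular :: "nat \<Rightarrow> 'a set \<Rightarrow> 'a set set \<Rightarrow> bool" where
  "regular d V E \<longleftrightarrow> (\<forall>v\<in>V. degree E v = d)"

definition bipartite :: "'a set \<Rightarrow> 'a set set \<Rightarrow> bool" where
  "bipartite V E \<longleftrightarrow> (\<exists>A B. A \<union> B = V \<and> A \<inter> B = {} \<and>
      (\<forall>e\<in>E. \<exists>a\<in>A. \<exists>b\<in>B. e = {a, b}))"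

definition matching :: "'a set set \<Rightarrow> 'a set set \<Rightarrow> bool" where
  "matching E M \<longleftrightarrow> M \<subseteq> E \<and> (\<forall>e\<in>M. \<forall>f\<in>M. e \<noteq> f \<longrightarrow> e \<inter> f = {})"

definition num_matchings :: "'a set set \<Rightarrow> nat \<Rightarrow> nat" where
  "num_matchings E k = card {M. matching E M \<and> card M = k}"

definition xln :: "real \<Rightarrow> real \<Rightarrow> real" where
  "xln t s = (if t = 0 then 0 else t * ln s)"

definition GG :: "nat \<Rightarrow> real \<Rightarrow> real" where
  "GG d p = (1/2) * (xln p (real d / p) + xln (real d - p) (1 - p / real d)
                     - 2 * xln (1 - p) (1 - p))"

end

theory Submission
  imports Defs "HOL-Library.Nat_Bijection"
begin

text \<open>Apply the hypothesis to the disjoint union of m copies of G, a d-regular bipartite graph on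
  2mn vertices. Its number of matchings of size mk is an m-fold convolution of the sequence m_j(G).
  The matching numbers are log-concave: a pair of matchings is determined by their intersection,
  their symmetric difference S and the part of S taken from the first matching, and S admits at
  least as many splittings into two matchings of size s as of size s + 1 when card S = 2s. Hence
  m_j(G) lies below the geometric sequence through m_{k-1}(G) and m_k(G), which bounds the
  convolution by ((n + 1) m_k(G))^m. Dividing by 2mn and letting m tend to infinity gives
  G_d(k/n) \<le> ln((n + 1) m_k(G)) / (2n) \<le> (ln v(G) + ln m_k(G)) / v(G).\<close>

section \<open>Connected components of a family of edges\<close>

primrec edge_reach :: "'a set set \<Rightarrow> 'a set \<Rightarrow> nat \<Rightarrow> 'a set set" where
  "edge_reach S e 0 = {e}"
| "edge_reach S e (Suc n) = edge_reach S e n \<union> {g\<in>S. \<exists>f\<in>edge_reach S e n. f \<inter> g \<noteq> {}}"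

definition edge_component :: "'a set set \<Rightarrow> 'a set \<Rightarrow> 'a set set" where
  "edge_component S e = (\<Union>n. edge_reach S e n)"

definition edge_components :: "'a set set \<Rightarrow> 'a set set set" where
  "edge_components S = edge_component S ` S"

definition edge_closed :: "'a set set \<Rightarrow> 'a set set \<Rightarrow> bool" where
  "edge_closed S U \<longleftrightarrow> (\<forall>e\<in>S. \<forall>f\<in>S. e \<inter> f \<noteq> {} \<longrightarrow> (e \<in> U \<longleftrightarrow> f \<in> U))"

lemma edge_reach_subset: "e \<in> S \<Longrightarrow> edge_reach S e n \<subseteq> S"
  by (induction n) auto

lemma edge_reach_mono: "m \<le> n \<Longrightarrow> edge_reach S e m \<subseteq> edge_reach S e n"
  by (induction n) (auto simp: le_Suc_eq)

lemma edge_component_subset: "e \<in> S \<Longrightarrow> edge_component S e \<subseteq> S"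
  using edge_reach_subset unfolding edge_component_def by blast

lemma edge_component_self: "e \<in> edge_component S e"
  unfolding edge_component_def using edge_reach.simps(1) by blast

lemma edge_component_meeting:
  assumes "f \<in> edge_component S e" "g \<in> S" "f \<inter> g \<noteq> {}"
  shows "g \<in> edge_component S e"
proof -
  obtain n where "f \<in> edge_reach S e n"
    using assms(1) unfolding edge_component_def by blast
  then have "g \<in> edge_reach S e (Suc n)"
    using assms(2,3) by auto
  then show ?thesis
    unfolding edge_component_def by blast
qed

lemma edge_closed_edge_component: "edge_closed S (edge_component S e)"
  unfolding edge_closed_def using edge_component_meeting by (metis inf_commute)

lemma edge_component_closed_mem:
  assumes "edge_closed S U" "e \<in> S" "f \<in> edge_component S e"
  shows "f \<in> U \<longleftrightarrow> e \<in> U"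
proof -
  have "f \<in> U \<longleftrightarrow> e \<in> U" if "f \<in> edge_reach S e n" for n f
    using that
  proof (induction n arbitrary: f)
    case (Suc n)
    show ?case
    proof (cases "f \<in> edge_reach S e n")
      case False
      then obtain g where g: "g \<in> edge_reach S e n" "g \<inter> f \<noteq> {}" "f \<in> S"
        using Suc.prems by auto
      then have "f \<in> U \<longleftrightarrow> g \<in> U"
        using assms(1,2) edge_reach_subset unfolding edge_closed_def by blast
      then show ?thesis
        using Suc.IH g(1) by blast
    qed (use Suc.IH in blast)
  qed simp
  then show ?thesis
    using assms(3) unfolding edge_component_def by blast
qed

lemma edge_component_eq:
  assumes "e \<in> S" "g \<in> edge_component S e"
  shows "edge_component S g = edge_component S e"
proof -
  have "g \<in> S"
    using edge_component_subset assms by blast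
  have "e \<in> edge_component S g"
    using edge_component_closed_mem[OF edge_closed_edge_component assms] edge_component_self by blast
  then show ?thesis
    using edge_component_closed_mem[OF edge_closed_edge_component] assms \<open>g \<in> S\<close> by blast
qed

lemma edge_components_disjoint:
  "K \<in> edge_components S \<Longrightarrow> K' \<in> edge_components S \<Longrightarrow> K \<noteq> K' \<Longrightarrow> K \<inter> K' = {}"
  unfolding edge_components_def using edge_component_eq by blast

lemma edge_components_subset: "K \<in> edge_components S \<Longrightarrow> K \<subseteq> S"
  unfolding edge_components_def using edge_component_subset by blast

lemma finite_edge_components: "finite S \<Longrightarrow> finite (edge_components S)"
  unfolding edge_components_def by simp

lemma Union_edge_components: "\<Union>(edge_components S) = S"
proof
  show "\<Union>(edge_components S) \<subseteq> S"
    using edge_components_subset by blast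
  show "S \<subseteq> \<Union>(edge_components S)"
    unfolding edge_components_def using edge_component_self by blast
qed

lemma edge_closed_Union_edge_components:
  assumes "F \<subseteq> edge_components S"
  shows "edge_closed S (\<Union>F)"
  unfolding edge_closed_def
proof (intro ballI impI)
  fix e f assume ef: "e \<in> S" "f \<in> S" "e \<inter> f \<noteq> {}"
  have "f \<in> \<Union>F" if "e \<in> \<Union>F" "e \<in> S" "f \<in> S" "e \<inter> f \<noteq> {}" for e f
    using that assms edge_component_meeting unfolding edge_components_def by blast
  then show "e \<in> \<Union>F \<longleftrightarrow> f \<in> \<Union>F"
    using ef by (metis inf_commute)
qed

lemma edge_closed_eq_Union_edge_components:
  assumes "edge_closed S U" "U \<subseteq> S"
  shows "U = \<Union>(edge_component S ` U)"
  using edge_component_self edge_component_closed_mem[OF assms(1)] assms(2) by blast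

lemma subset_edge_components_eq:
  assumes "F \<subseteq> edge_components S"
  shows "F = {K \<in> edge_components S. K \<subseteq> \<Union>F}"
proof (intro equalityI subsetI)
  fix K assume K: "K \<in> {K \<in> edge_components S. K \<subseteq> \<Union>F}"
  then obtain e where e: "e \<in> S" "K = edge_component S e"
    unfolding edge_components_def by blast
  then obtain K' where "K' \<in> F" "e \<in> K'"
    using K edge_component_self by blast
  then show "K \<in> F"
    using edge_components_disjoint[of K' S K] assms e K edge_component_self by blast
qed (use assms in blast)

text \<open>Each edge added to a layer of the breadth-first search meets an earlier edge, so it
  contributes at most one new vertex.\<close>

lemma card_Union_edge_reach_le:
  assumes "e \<in> S" "\<forall>x\<in>S. card x = 2" "finite S"
  shows "card (\<Union>(edge_reach S e n)) \<le> card (edge_reach S e n) + 1"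
proof (induction n)
  case 0
  then show ?case
    using assms by simp
next
  case (Suc n)
  define R where "R = edge_reach S e n"
  define New where "New = edge_reach S e (Suc n) - R"
  have fin2: "finite x" if "x \<in> S" for x
    using assms(2) that card.infinite by fastforce
  have fR: "finite R" and fN: "finite New"
    using edge_reach_subset[OF assms(1)] assms(3) finite_subset unfolding R_def New_def by blast+
  have finUR: "finite (\<Union>R)"
    using fR fin2 edge_reach_subset[OF assms(1)] unfolding R_def by blast
  have new_le1: "card (g - \<Union>R) \<le> 1" if "g \<in> New" for g
  proof -
    have gS: "g \<in> S" and "\<exists>f\<in>R. f \<inter> g \<noteq> {}"
      using that unfolding New_def R_def by auto
    then obtain x where x: "x \<in> g" "x \<in> \<Union>R" by blast
    have "card (g - \<Union>R) \<le> card (g - {x})"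
      using x fin2[OF gS] by (intro card_mono) auto
    also have "\<dots> = 1"
      using assms(2) gS x(1) fin2[OF gS] by simp
    finally show ?thesis .
  qed
  have "\<Union>(edge_reach S e (Suc n)) \<subseteq> \<Union>R \<union> (\<Union>g\<in>New. g - \<Union>R)"
    unfolding New_def R_def by blast
  moreover have "finite g" if "g \<in> New" for g
    using that fin2 edge_reach_subset[OF assms(1), of "Suc n"] unfolding New_def by blast
  ultimately have "card (\<Union>(edge_reach S e (Suc n))) \<le> card (\<Union>R \<union> (\<Union>g\<in>New. g - \<Union>R))"
    using finUR fN by (intro card_mono) simp_all
  also have "\<dots> \<le> card (\<Union>R) + (\<Sum>g\<in>New. card (g - \<Union>R))"
    by (rule order_trans[OF card_Un_le add_left_mono[OF card_UN_le[OF fN]]])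
  also have "\<dots> \<le> card (\<Union>R) + card New"
    using sum_mono[of New "\<lambda>g. card (g - \<Union>R)" "\<lambda>_. 1"] new_le1 by simp
  also have "\<dots> \<le> card R + card New + 1"
    using Suc.IH unfolding R_def by simp
  also have "card R + card New = card (R \<union> New)"
    by (rule card_Un_disjoint[OF fR fN, symmetric]) (auto simp: New_def)
  also have "R \<union> New = edge_reach S e (Suc n)"
    unfolding New_def R_def by auto
  finally show ?case .
qed

lemma card_Union_edge_component_le:
  assumes "e \<in> S" "\<forall>x\<in>S. card x = 2" "finite S"
  shows "card (\<Union>(edge_component S e)) \<le> card (edge_component S e) + 1"
proof -
  have fin: "finite (edge_component S e)"
    using edge_component_subset[OF assms(1)] assms(3) finite_subset by blast
  have "\<forall>f\<in>edge_component S e. \<exists>n. f \<in> edge_reach S e n"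
    unfolding edge_component_def by blast
  then obtain r where r: "\<forall>f\<in>edge_component S e. f \<in> edge_reach S e (r f)"
    by metis
  define N where "N = Max (r ` edge_component S e)"
  have "edge_component S e \<subseteq> edge_reach S e N"
  proof
    fix f assume f: "f \<in> edge_component S e"
    then have "r f \<le> N"
      unfolding N_def using fin by simp
    then show "f \<in> edge_reach S e N"
      using edge_reach_mono r f by blast
  qed
  then have "edge_component S e = edge_reach S e N"
    unfolding edge_component_def by blast
  then show ?thesis
    using card_Union_edge_reach_le[OF assms] by simp
qed

section \<open>Splittings of an edge family into two matchings\<close>

definition splittings :: "'a set set \<Rightarrow> 'a set set set" where
  "splittings S = {X. X \<subseteq> S \<and> pairwise disjnt X \<and> pairwise disjnt (S - X)}"

lemma card_Union_pairwise_disjnt_2sets: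
  assumes "pairwise disjnt X" "\<forall>x\<in>X. card x = 2"
  shows "card (\<Union>X) = 2 * card X"
proof -
  have "card (\<Union>X) = sum card X"
    using assms by (intro card_Union_disjoint) (auto intro: card_ge_0_finite)
  then show ?thesis
    using assms(2) by simp
qed

lemma splitting_separates_meeting_edges:
  assumes "X \<in> splittings S" "e \<in> S" "f \<in> S" "e \<noteq> f" "e \<inter> f \<noteq> {}"
  shows "e \<in> X \<longleftrightarrow> f \<notin> X"
proof -
  have "pairwise disjnt X" "pairwise disjnt (S - X)"
    using assms(1) unfolding splittings_def by auto
  then show ?thesis
    using assms(2-5) by (meson DiffI disjnt_def pairwiseD)
qed

lemma edge_closed_sym_diff_splittings:
  assumes "X0 \<in> splittings S" "X \<in> splittings S"
  shows "edge_closed S (sym_diff X0 X)"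
  unfolding edge_closed_def
proof (intro ballI impI)
  fix e f assume ef: "e \<in> S" "f \<in> S" "e \<inter> f \<noteq> {}"
  show "e \<in> sym_diff X0 X \<longleftrightarrow> f \<in> sym_diff X0 X"
  proof (cases "e = f")
    case False
    then show ?thesis
      using splitting_separates_meeting_edges[OF assms(1) ef(1,2) False ef(3)]
        splitting_separates_meeting_edges[OF assms(2) ef(1,2) False ef(3)] by blast
  qed simp
qed

lemma sym_diff_splitting:
  assumes "X0 \<in> splittings S" "edge_closed S U" "U \<subseteq> S"
  shows "sym_diff X0 U \<in> splittings S"
proof -
  have X0: "X0 \<subseteq> S" "pairwise disjnt X0" "pairwise disjnt (S - X0)"
    using assms(1) unfolding splittings_def by auto
  have "disjnt e f"
    if "e \<in> S" "f \<in> S" "e \<noteq> f" "e \<in> sym_diff X0 U \<longleftrightarrow> f \<in> sym_diff X0 U" for e f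
  proof (rule ccontr)
    assume meet: "\<not> disjnt e f"
    then have "e \<in> U \<longleftrightarrow> f \<in> U"
      using assms(2) that(1,2) unfolding edge_closed_def disjnt_def by blast
    then show False
      using that splitting_separates_meeting_edges[OF assms(1) that(1-3)] meet
      unfolding disjnt_def by blast
  qed
  moreover have "sym_diff X0 U \<subseteq> S"
    using X0(1) assms(3) by blast
  ultimately show ?thesis
    unfolding splittings_def pairwise_def by auto
qed

text \<open>Two splittings differ on an edge-closed set, that is, on a union of components.\<close>

lemma bij_betw_flip_components:
  assumes "X0 \<in> splittings S"
  shows "bij_betw (\<lambda>F. sym_diff X0 (\<Union>F)) (Pow (edge_components S)) (splittings S)"
proof (rule bij_betw_imageI)
  show "inj_on (\<lambda>F. sym_diff X0 (\<Union>F)) (Pow (edge_components S))"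
  proof (rule inj_onI)
    fix F G assume FG: "F \<in> Pow (edge_components S)" "G \<in> Pow (edge_components S)"
      and eq: "sym_diff X0 (\<Union>F) = sym_diff X0 (\<Union>G)"
    have "\<Union>F = \<Union>G"
      using eq by blast
    then show "F = G"
      using subset_edge_components_eq FG by (metis PowD)
  qed
  show "(\<lambda>F. sym_diff X0 (\<Union>F)) ` Pow (edge_components S) = splittings S"
  proof
    show "(\<lambda>F. sym_diff X0 (\<Union>F)) ` Pow (edge_components S) \<subseteq> splittings S"
      using sym_diff_splitting[OF assms edge_closed_Union_edge_components] edge_components_subset
      by blast
    show "splittings S \<subseteq> (\<lambda>F. sym_diff X0 (\<Union>F)) ` Pow (edge_components S)"
    proof
      fix X assume X: "X \<in> splittings S"
      define U where "U = sym_diff X0 X"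
      have US: "U \<subseteq> S"
        using assms X unfolding U_def splittings_def by auto
      have "U = \<Union>(edge_component S ` U)"
        using edge_closed_eq_Union_edge_components[OF _ US] edge_closed_sym_diff_splittings[OF assms X]
        unfolding U_def by blast
      moreover have "edge_component S ` U \<subseteq> edge_components S"
        using US unfolding edge_components_def by blast
      moreover have "X = sym_diff X0 U"
        unfolding U_def by blast
      ultimately show "X \<in> (\<lambda>F. sym_diff X0 (\<Union>F)) ` Pow (edge_components S)"
        by (intro image_eqI[where x = "edge_component S ` U"]) auto
    qed
  qed
qed

lemma card_flip_components:
  assumes "finite S" "X0 \<subseteq> S" "F \<subseteq> edge_components S"
  shows "card (sym_diff X0 (\<Union>F)) + (\<Sum>K\<in>F. card (K \<inter> X0)) = card X0 + (\<Sum>K\<in>F. card (K - X0))"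
proof -
  have fF: "finite F"
    using finite_subset[OF assms(3) finite_edge_components[OF assms(1)]] .
  have fK: "finite K" if "K \<in> F" for K
    using that assms(1,3) by (meson edge_components_subset finite_subset subsetD)
  have disj: "\<forall>i\<in>F. \<forall>j\<in>F. i \<noteq> j \<longrightarrow> i \<inter> j = {}"
    using assms(3) edge_components_disjoint by blast
  have fX0: "finite X0"
    using finite_subset[OF assms(2,1)] .
  have fU: "finite (\<Union>F)"
    using fF fK by blast
  have "card (sym_diff X0 (\<Union>F)) = card (X0 - \<Union>F) + card (\<Union>F - X0)"
    by (rule card_Un_disjoint) (use fX0 fU in blast)+
  moreover have "card (X0 - \<Union>F) + card (X0 \<inter> \<Union>F) = card X0"
    using card_Int_Diff[OF fX0, of "\<Union>F"] by simp
  moreover have "card (X0 \<inter> \<Union>F) = (\<Sum>K\<in>F. card (K \<inter> X0))"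
  proof -
    have "X0 \<inter> \<Union>F = (\<Union>K\<in>F. K \<inter> X0)"
      by blast
    also have "card \<dots> = (\<Sum>K\<in>F. card (K \<inter> X0))"
      by (rule card_UN_disjoint[OF fF]) (use fK disj in blast)+
    finally show ?thesis .
  qed
  moreover have "card (\<Union>F - X0) = (\<Sum>K\<in>F. card (K - X0))"
  proof -
    have "\<Union>F - X0 = (\<Union>K\<in>F. K - X0)"
      by blast
    also have "card \<dots> = (\<Sum>K\<in>F. card (K - X0))"
      by (rule card_UN_disjoint[OF fF]) (use fK disj in blast)+
    finally show ?thesis .
  qed
  ultimately show ?thesis
    by linarith
qed

text \<open>K \<inter> X0 is a matching inside K, so it covers 2 card (K \<inter> X0) of the at most card K + 1
  vertices of K.\<close>

lemma card_component_Int_splitting_le: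
  assumes "finite S" "\<forall>x\<in>S. card x = 2" "X0 \<in> splittings S" "K \<in> edge_components S"
  shows "card (K \<inter> X0) \<le> card (K - X0) + 1"
proof -
  obtain e where e: "e \<in> S" "K = edge_component S e"
    using assms(4) unfolding edge_components_def by blast
  have KS: "K \<subseteq> S"
    using edge_components_subset[OF assms(4)] .
  have fK: "finite K"
    using KS assms(1) by (rule finite_subset)
  have "pairwise disjnt (K \<inter> X0)"
    using assms(3) pairwise_subset unfolding splittings_def by blast
  moreover have "\<forall>x\<in>K \<inter> X0. card x = 2"
    using assms(2) KS by blast
  ultimately have "2 * card (K \<inter> X0) = card (\<Union>(K \<inter> X0))"
    using card_Union_pairwise_disjnt_2sets by metis
  also have "\<dots> \<le> card (\<Union>K)"
  proof (rule card_mono)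
    show "finite (\<Union>K)"
      using fK KS assms(2) by (metis card.infinite finite_Union subsetD zero_neq_numeral)
  qed blast
  also have "\<dots> \<le> card K + 1"
    using card_Union_edge_component_le[OF e(1) assms(2,1)] e(2) by simp
  also have "card K = card (K \<inter> X0) + card (K - X0)"
    using fK by (metis card_Int_Diff)
  finally show ?thesis
    by linarith
qed

definition surplus_components :: "'a set set \<Rightarrow> 'a set set \<Rightarrow> 'a set set set" where
  "surplus_components S X0 = {K \<in> edge_components S. card (K \<inter> X0) = card (K - X0) + 1}"

lemma card_component_Diff_maximal_splitting_le:
  assumes "finite S" "X0 \<in> splittings S" "\<forall>X\<in>splittings S. card X \<le> card X0"
    and "K \<in> edge_components S"
  shows "card (K - X0) \<le> card (K \<inter> X0)"
proof -
  have K: "{K} \<subseteq> edge_components S"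
    using assms(4) by simp
  have "sym_diff X0 K \<in> splittings S"
    using sym_diff_splitting[OF assms(2) edge_closed_Union_edge_components[OF K]]
      edge_components_subset[OF assms(4)] by simp
  then have "card (sym_diff X0 K) \<le> card X0"
    using assms(3) by blast
  moreover have "card (sym_diff X0 K) + card (K \<inter> X0) = card X0 + card (K - X0)"
    using card_flip_components[OF assms(1) _ K] assms(2) unfolding splittings_def by simp
  ultimately show ?thesis
    by linarith
qed

lemma card_flip_components_maximal:
  assumes "finite S" "\<forall>x\<in>S. card x = 2"
    and "X0 \<in> splittings S" "\<forall>X\<in>splittings S. card X \<le> card X0"
    and "F \<subseteq> edge_components S"
  shows "card (sym_diff X0 (\<Union>F)) + card (F \<inter> surplus_components S X0) = card X0"
proof -
  let ?P = "surplus_components S X0"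
  have fF: "finite F"
    using finite_subset[OF assms(5) finite_edge_components[OF assms(1)]] .
  have "card (K \<inter> X0) = card (K - X0) + (if K \<in> ?P then 1 else 0)" if "K \<in> F" for K
  proof -
    have K: "K \<in> edge_components S"
      using that assms(5) by blast
    have "card (K - X0) \<le> card (K \<inter> X0)" "card (K \<inter> X0) \<le> card (K - X0) + 1"
      using card_component_Diff_maximal_splitting_le[OF assms(1,3,4) K]
        card_component_Int_splitting_le[OF assms(1-3) K] .
    then show ?thesis
      using K unfolding surplus_components_def by (cases "K \<in> ?P") (auto simp: surplus_components_def)
  qed
  then have sum_eq: "(\<Sum>K\<in>F. card (K \<inter> X0)) = (\<Sum>K\<in>F. card (K - X0)) + card (F \<inter> ?P)"
    using fF by (simp add: sum.distrib sum.If_cases)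
  have "X0 \<subseteq> S"
    using assms(3) unfolding splittings_def by simp
  then have "card (sym_diff X0 (\<Union>F)) + (\<Sum>K\<in>F. card (K \<inter> X0)) = card X0 + (\<Sum>K\<in>F. card (K - X0))"
    using card_flip_components[OF assms(1) _ assms(5)] by blast
  then show ?thesis
    using sum_eq by linarith
qed

lemma card_subsets_with_card_Int:
  assumes "finite Q" "P \<subseteq> Q"
  shows "card {F. F \<subseteq> Q \<and> card (F \<inter> P) = r} = (card P choose r) * 2 ^ card (Q - P)"
proof -
  have "bij_betw (\<lambda>F. (F \<inter> P, F - P)) {F. F \<subseteq> Q \<and> card (F \<inter> P) = r}
          ({G. G \<subseteq> P \<and> card G = r} \<times> Pow (Q - P))"
  proof (rule bij_betw_byWitness[where f' = "\<lambda>(G, H). G \<union> H"])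
    show "(\<lambda>(G, H). G \<union> H) ` ({G. G \<subseteq> P \<and> card G = r} \<times> Pow (Q - P))
        \<subseteq> {F. F \<subseteq> Q \<and> card (F \<inter> P) = r}"
    proof
      fix y assume "y \<in> (\<lambda>(G, H). G \<union> H) ` ({G. G \<subseteq> P \<and> card G = r} \<times> Pow (Q - P))"
      then obtain G H where GH: "y = G \<union> H" "G \<subseteq> P" "card G = r" "H \<subseteq> Q - P"
        by auto
      then have "(G \<union> H) \<inter> P = G"
        by blast
      then show "y \<in> {F. F \<subseteq> Q \<and> card (F \<inter> P) = r}"
        using GH assms by auto
    qed
  qed auto
  then have "card {F. F \<subseteq> Q \<and> card (F \<inter> P) = r} = card ({G. G \<subseteq> P \<and> card G = r} \<times> Pow (Q - P))"
    by (rule bij_betw_same_card)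
  also have "\<dots> = (card P choose r) * 2 ^ card (Q - P)"
    using assms by (simp add: card_cartesian_product n_subsets card_Pow finite_subset)
  finally show ?thesis .
qed

lemma card_splittings_of_size:
  assumes "finite S" "\<forall>x\<in>S. card x = 2"
    and "X0 \<in> splittings S" "\<forall>X\<in>splittings S. card X \<le> card X0"
  shows "card {X \<in> splittings S. card X = t}
    = card {F. F \<subseteq> edge_components S \<and> card (F \<inter> surplus_components S X0) + t = card X0}"
proof -
  let ?flip = "\<lambda>F. sym_diff X0 (\<Union>F)"
  let ?Fs = "{F. F \<subseteq> edge_components S \<and> card (F \<inter> surplus_components S X0) + t = card X0}"
  have bij: "bij_betw ?flip (Pow (edge_components S)) (splittings S)"
    using bij_betw_flip_components[OF assms(3)] .
  have card_flip: "card (?flip F) = t \<longleftrightarrow> card (F \<inter> surplus_components S X0) + t = card X0"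
    if "F \<subseteq> edge_components S" for F
    using card_flip_components_maximal[OF assms that] by linarith
  have "{X \<in> splittings S. card X = t} = ?flip ` ?Fs"
  proof (intro equalityI subsetI)
    fix X assume X: "X \<in> {X \<in> splittings S. card X = t}"
    then obtain F where F: "F \<subseteq> edge_components S" "X = ?flip F"
      using bij unfolding bij_betw_def by (metis (no_types, lifting) CollectD PowD imageE)
    then show "X \<in> ?flip ` ?Fs"
      using card_flip X by blast
  next
    fix X assume "X \<in> ?flip ` ?Fs"
    then show "X \<in> {X \<in> splittings S. card X = t}"
      using bij card_flip unfolding bij_betw_def by auto
  qed
  moreover have "inj_on ?flip ?Fs"
    using bij_betw_imp_inj_on[OF bij] by (rule inj_on_subset) auto
  ultimately show ?thesis
    by (simp add: card_image)
qed

lemma card_surplus_components: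
  assumes "finite S" "\<forall>x\<in>S. card x = 2"
    and "X0 \<in> splittings S" "\<forall>X\<in>splittings S. card X \<le> card X0"
  shows "card S + card (surplus_components S X0) = 2 * card X0"
proof -
  have X0S: "X0 \<subseteq> S"
    using assms(3) unfolding splittings_def by simp
  have "sym_diff X0 (\<Union>(edge_components S)) = S - X0"
    using Union_edge_components X0S by blast
  moreover have "surplus_components S X0 \<subseteq> edge_components S"
    unfolding surplus_components_def by blast
  ultimately have "card (S - X0) + card (surplus_components S X0) = card X0"
    using card_flip_components_maximal[OF assms, of "edge_components S"] by (simp add: Int_absorb1)
  moreover have "card S = card X0 + card (S - X0)"
    using card_Int_Diff[OF assms(1), of X0] X0S by (simp add: Int_absorb1)
  ultimately show ?thesis
    by linarith
qed

text \<open>For a maximum splitting X0 of S with card S = 2s, the surplus components number 2c with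
  c = card X0 - s, and the splittings of size t correspond to the families of components containing
  exactly card X0 - t surplus ones; so the claim reduces to
  (2c choose c - 1) \<le> (2c choose c).\<close>

lemma card_splittings_Suc_le:
  assumes "finite S" "\<forall>x\<in>S. card x = 2" "card S = 2 * s"
  shows "card {X \<in> splittings S. card X = Suc s} \<le> card {X \<in> splittings S. card X = s}"
proof (cases "splittings S = {}")
  case False
  have "\<forall>X. X \<in> splittings S \<longrightarrow> card X < card S + 1"
    using card_mono[OF assms(1)] unfolding splittings_def by (simp add: le_imp_less_Suc)
  then obtain X0 where X0: "X0 \<in> splittings S" "\<forall>X\<in>splittings S. card X \<le> card X0"
    using False Lattices_Big.ex_has_greatest_nat[of "\<lambda>X. X \<in> splittings S" _ card] by blast
  define Q where "Q = edge_components S"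
  define P where "P = surplus_components S X0"
  define c where "c = card X0 - s"
  have fQ: "finite Q" and PQ: "P \<subseteq> Q"
    using finite_edge_components[OF assms(1)] unfolding Q_def P_def surplus_components_def by auto
  have s_le: "s \<le> card X0" and cP: "card P = 2 * c"
    using card_surplus_components[OF assms(1,2) X0] assms(3) unfolding P_def c_def by linarith+
  have count: "card {X \<in> splittings S. card X = t} = card {F. F \<subseteq> Q \<and> card (F \<inter> P) = card X0 - t}"
    if "t \<le> card X0" for t
  proof -
    have "{F. F \<subseteq> Q \<and> card (F \<inter> P) + t = card X0} = {F. F \<subseteq> Q \<and> card (F \<inter> P) = card X0 - t}"
      using that by auto
    then show ?thesis
      using card_splittings_of_size[OF assms(1,2) X0, of t] unfolding P_def Q_def by simp
  qed
  show ?thesis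
  proof (cases "c = 0")
    case True
    then have "card X \<le> s" if "X \<in> splittings S" for X
      using X0(2) that s_le unfolding c_def by fastforce
    then have "{X \<in> splittings S. card X = Suc s} = {}"
      by fastforce
    then show ?thesis
      by (metis card.empty zero_le)
  next
    case False
    then have "card {X \<in> splittings S. card X = Suc s} = (card P choose (c - 1)) * 2 ^ card (Q - P)"
      using count[of "Suc s"] card_subsets_with_card_Int[OF fQ PQ] s_le unfolding c_def
      by (simp add: Suc_diff_Suc)
    also have "\<dots> \<le> (card P choose c) * 2 ^ card (Q - P)"
      using binomial_maximum'[of c "c - 1"] cP by simp
    also have "\<dots> = card {X \<in> splittings S. card X = s}"
      using count[of s] card_subsets_with_card_Int[OF fQ PQ] s_le unfolding c_def by simp
    finally show ?thesis .
  qed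
qed simp

section \<open>Log-concavity of the matching numbers\<close>

lemma matching_iff_pairwise_disjnt: "matching E M \<longleftrightarrow> M \<subseteq> E \<and> pairwise disjnt M"
  unfolding matching_def pairwise_def disjnt_def by auto

lemma pairwise_disjnt_Un:
  assumes "pairwise disjnt A" "pairwise disjnt B" "\<forall>a\<in>A. \<forall>b\<in>B. disjnt a b"
  shows "pairwise disjnt (A \<union> B)"
  using assms unfolding pairwise_def by (metis Un_iff disjnt_sym)

definition matchings_of_size :: "'a set set \<Rightarrow> nat \<Rightarrow> 'a set set set" where
  "matchings_of_size E a = {M. matching E M \<and> card M = a}"

lemma finite_matchings_of_size: "finite E \<Longrightarrow> finite (matchings_of_size E a)"
  unfolding matchings_of_size_def matching_def by (rule finite_subset[of _ "Pow E"]) auto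

text \<open>A pair of matchings (A, B) is recorded by its shape (A \<inter> B, sym_diff A B) together with
  the splitting A - B of the symmetric difference.\<close>

definition matching_shapes :: "'a set set \<Rightarrow> nat \<Rightarrow> ('a set set \<times> 'a set set) set" where
  "matching_shapes E c = {(I, S). I \<subseteq> E \<and> S \<subseteq> E \<and> pairwise disjnt I \<and> I \<inter> S = {}
      \<and> (\<forall>e\<in>I. \<forall>f\<in>S. disjnt e f) \<and> 2 * card I + card S = c}"

definition shape_splittings :: "nat \<Rightarrow> 'a set set \<times> 'a set set \<Rightarrow> 'a set set set" where
  "shape_splittings a = (\<lambda>(I, S). {X \<in> splittings S. card I + card X = a})"

lemma finite_matching_shapes: "finite E \<Longrightarrow> finite (matching_shapes E c)"
  unfolding matching_shapes_def by (rule finite_subset[of _ "Pow E \<times> Pow E"]) auto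

lemma finite_shape_splittings:
  assumes "finite E" "p \<in> matching_shapes E c"
  shows "finite (shape_splittings a p)"
proof -
  obtain I S where p: "p = (I, S)" "S \<subseteq> E"
    using assms(2) unfolding matching_shapes_def by auto
  then have "shape_splittings a p \<subseteq> Pow S"
    unfolding shape_splittings_def splittings_def by auto
  then show ?thesis
    using assms(1) p(2) finite_subset by (metis finite_Pow_iff)
qed

lemma shape_of_matchings:
  assumes "finite E" "A \<in> matchings_of_size E a" "B \<in> matchings_of_size E b"
  shows "((A \<inter> B, sym_diff A B), A - B) \<in> Sigma (matching_shapes E (a + b)) (shape_splittings a)"
proof -
  have A: "A \<subseteq> E" "pairwise disjnt A" "card A = a" and B: "B \<subseteq> E" "pairwise disjnt B" "card B = b"
    using assms(2,3) unfolding matchings_of_size_def matching_iff_pairwise_disjnt by auto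
  have fin: "finite A" "finite B"
    using A(1) B(1) assms(1) finite_subset by auto
  have "card A = card (A \<inter> B) + card (A - B)" "card B = card (A \<inter> B) + card (B - A)"
    using card_Int_Diff[OF fin(1), of B] card_Int_Diff[OF fin(2), of A] by (simp_all add: Int_commute)
  moreover have "card (sym_diff A B) = card (A - B) + card (B - A)"
    by (rule card_Un_disjoint) (use fin in blast)+
  moreover have "disjnt e f" if "e \<in> A \<inter> B" "f \<in> sym_diff A B" for e f
    using that A(2) B(2) by (auto dest: pairwiseD)
  moreover have "pairwise disjnt (A \<inter> B)" "pairwise disjnt (A - B)"
    using A(2) pairwise_subset by blast+
  moreover have "pairwise disjnt (sym_diff A B - (A - B))"
    using B(2) pairwise_subset by (metis Diff_subset Un_Diff_cancel Un_Diff Diff_cancel Un_empty_left)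
  ultimately show ?thesis
    using A B unfolding matching_shapes_def shape_splittings_def splittings_def by auto
qed

lemma matchings_of_shape:
  assumes "finite E" "((I, S), X) \<in> Sigma (matching_shapes E (a + b)) (shape_splittings a)"
  shows "(I \<union> X, I \<union> (S - X)) \<in> matchings_of_size E a \<times> matchings_of_size E b"
proof -
  have I: "I \<subseteq> E" "S \<subseteq> E" "pairwise disjnt I" "I \<inter> S = {}" "\<forall>e\<in>I. \<forall>f\<in>S. disjnt e f"
    "2 * card I + card S = a + b"
    using assms(2) unfolding matching_shapes_def by auto
  have X: "X \<subseteq> S" "pairwise disjnt X" "pairwise disjnt (S - X)" "card I + card X = a"
    using assms(2) unfolding shape_splittings_def splittings_def by auto
  have fin: "finite I" "finite S" "finite X"
    using finite_subset[OF I(1) assms(1)] finite_subset[OF I(2) assms(1)] finite_subset[OF X(1)]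
    by auto
  have "card (I \<union> X) = card I + card X"
    by (rule card_Un_disjoint) (use fin I(4) X(1) in blast)+
  moreover have "card (I \<union> (S - X)) = card I + card (S - X)"
    by (rule card_Un_disjoint) (use fin I(4) in blast)+
  moreover have "card (S - X) = card S - card X" "card X \<le> card S"
    using card_Diff_subset[OF fin(3) X(1)] card_mono[OF fin(2) X(1)] by auto
  moreover have "pairwise disjnt (I \<union> X)" "pairwise disjnt (I \<union> (S - X))"
    using pairwise_disjnt_Un I(3,5) X(1-3) by (metis DiffD1 subsetD)+
  ultimately show ?thesis
    using I X unfolding matchings_of_size_def matching_iff_pairwise_disjnt by auto
qed

lemma num_matchings_mult_eq_sum_shapes:
  assumes "finite E"
  shows "num_matchings E a * num_matchings E b
    = (\<Sum>p\<in>matching_shapes E (a + b). card (shape_splittings a p))"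
proof -
  have "bij_betw (\<lambda>(A, B). ((A \<inter> B, sym_diff A B), A - B))
      (matchings_of_size E a \<times> matchings_of_size E b)
      (Sigma (matching_shapes E (a + b)) (shape_splittings a))"
  proof (rule bij_betw_byWitness[where f' = "\<lambda>((I, S), X). (I \<union> X, I \<union> (S - X))"])
    show "\<forall>y\<in>Sigma (matching_shapes E (a + b)) (shape_splittings a).
        (\<lambda>(A, B). ((A \<inter> B, sym_diff A B), A - B)) ((\<lambda>((I, S), X). (I \<union> X, I \<union> (S - X))) y) = y"
      unfolding matching_shapes_def shape_splittings_def splittings_def by auto
  qed (use shape_of_matchings[OF assms] matchings_of_shape[OF assms] in auto)
  then have "card (matchings_of_size E a \<times> matchings_of_size E b)
      = card (Sigma (matching_shapes E (a + b)) (shape_splittings a))"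
    by (rule bij_betw_same_card)
  then show ?thesis
    using finite_matching_shapes[OF assms] finite_shape_splittings[OF assms]
    by (simp add: card_cartesian_product card_SigmaI num_matchings_def matchings_of_size_def)
qed

text \<open>The two sums over shapes are compared fibre by fibre: a shape (I, S) of total size 2j + 2
  has card S = 2s with s = j + 1 - card I.\<close>

lemma num_matchings_log_concave:
  assumes "finite E" "\<forall>e\<in>E. card e = 2"
  shows "num_matchings E (j + 2) * num_matchings E j \<le> num_matchings E (j + 1) ^ 2"
proof -
  have "card (shape_splittings (j + 2) p) \<le> card (shape_splittings (j + 1) p)"
    if shape: "p \<in> matching_shapes E (2 * j + 2)" for p
  proof -
    obtain I S where p: "p = (I, S)" "S \<subseteq> E" "2 * card I + card S = 2 * j + 2"
      using shape unfolding matching_shapes_def by (cases p) auto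
    define s where "s = j + 1 - card I"
    have "card S = 2 * s"
      using p(3) unfolding s_def by linarith
    then have "card {X \<in> splittings S. card X = Suc s} \<le> card {X \<in> splittings S. card X = s}"
      using card_splittings_Suc_le finite_subset[OF p(2) assms(1)] assms(2) p(2) by blast
    moreover have "shape_splittings (j + 2) p = {X \<in> splittings S. card X = Suc s}"
      "shape_splittings (j + 1) p = {X \<in> splittings S. card X = s}"
      using p(3) unfolding p(1) shape_splittings_def s_def by auto
    ultimately show ?thesis
      by simp
  qed
  then have "(\<Sum>p\<in>matching_shapes E (2 * j + 2). card (shape_splittings (j + 2) p))
      \<le> (\<Sum>p\<in>matching_shapes E (2 * j + 2). card (shape_splittings (j + 1) p))"
    by (rule sum_mono)
  then show ?thesis
    using num_matchings_mult_eq_sum_shapes[OF assms(1), of "j + 2" j]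
      num_matchings_mult_eq_sum_shapes[OF assms(1), of "j + 1" "j + 1"]
    by (simp add: power2_eq_square mult_2 add_ac)
qed

section \<open>Concave sequences lie below their secants\<close>

lemma concave_seq_le_secant:
  fixes f :: "nat \<Rightarrow> real"
  assumes concave: "\<And>i. i + 2 \<le> N \<Longrightarrow> f (i + 2) - f (i + 1) \<le> f (i + 1) - f i"
    and "1 \<le> k" "k \<le> N" "j \<le> N"
  shows "f j \<le> f k + (f k - f (k - 1)) * (real j - real k)"
proof -
  define g where "g i = f (Suc i) - f i" for i
  have g_antimono: "g i' \<le> g i" if "i \<le> i'" "i' < N" for i i'
    using that
  proof (induction i' rule: dec_induct)
    case (step n)
    then show ?case
      using concave[of n] unfolding g_def by (simp add: numeral_2_eq_2)
  qed simp
  have s: "f k - f (k - 1) = g (k - 1)"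
    using assms(2) unfolding g_def by simp
  show ?thesis
    unfolding s
  proof (cases "k \<le> j")
    case True
    have "f j - f k = (\<Sum>i = k..<j. g i)"
      using sum_Suc_diff'[OF True, of f] unfolding g_def by simp
    also have "\<dots> \<le> real (card {k..<j}) * g (k - 1)"
      using g_antimono assms(4) by (intro sum_bounded_above) auto
    also have "\<dots> = g (k - 1) * (real j - real k)"
      using True by (simp add: of_nat_diff)
    finally show "f j \<le> f k + g (k - 1) * (real j - real k)"
      by linarith
  next
    case False
    have "g (k - 1) * (real k - real j) = real (card {j..<k}) * g (k - 1)"
      using False by (simp add: of_nat_diff)
    also have "\<dots> \<le> (\<Sum>i = j..<k. g i)"
      using g_antimono assms(3) by (intro sum_bounded_below) auto
    also have "\<dots> = f k - f j"
      using sum_Suc_diff'[of j k f] False unfolding g_def by simp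
    finally show "f j \<le> f k + g (k - 1) * (real j - real k)"
      by (simp add: right_diff_distrib)
  qed
qed

text \<open>Since positivity is down-closed, ln a is a concave sequence on an initial segment
  containing j and k.\<close>

lemma log_concave_le_exp_secant:
  fixes a :: "nat \<Rightarrow> nat"
  assumes log_concave: "\<And>j. a (j + 2) * a j \<le> a (j + 1) ^ 2"
    and down: "\<And>j. 0 < a (Suc j) \<Longrightarrow> 0 < a j"
    and "1 \<le> k" "0 < a k"
  shows "real (a j) \<le> real (a k) * exp ((ln (a k) - ln (a (k - 1))) * (real j - real k))"
proof (cases "a j = 0")
  case False
  define N where "N = max j k"
  have "0 < a N"
    using False assms(4) unfolding N_def by (simp add: max_def)
  have pos: "0 < a i" if "i \<le> N" for i
    using that \<open>0 < a N\<close> by (induction rule: inc_induct) (auto intro: down)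
  let ?L = "\<lambda>i. ln (real (a i))"
  have "?L (i + 2) - ?L (i + 1) \<le> ?L (i + 1) - ?L i" if "i + 2 \<le> N" for i
  proof -
    have "real (a (i + 2)) * real (a i) \<le> real (a (i + 1)) ^ 2"
      using log_concave[of i] by (metis of_nat_le_iff of_nat_mult of_nat_power)
    then have "ln (real (a (i + 2)) * real (a i)) \<le> ln (real (a (i + 1)) ^ 2)"
      using pos that by (subst ln_le_cancel_iff) auto
    then show ?thesis
      using pos that by (simp add: ln_mult ln_realpow)
  qed
  then have "?L j \<le> ?L k + (?L k - ?L (k - 1)) * (real j - real k)"
    using concave_seq_le_secant[of N ?L k j] assms(3) unfolding N_def by simp
  then have "exp (?L j) \<le> exp (?L k) * exp ((?L k - ?L (k - 1)) * (real j - real k))"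
    by (simp flip: exp_add)
  then show ?thesis
    using False assms(4) by simp
qed simp

section \<open>Disjoint copies of a graph\<close>

text \<open>The vertex type is fixed to nat, so the disjoint union of m copies of a graph is realised
  inside nat through the pairing bijection prod_encode.\<close>

definition copy :: "nat \<Rightarrow> nat \<Rightarrow> nat" where
  "copy i v = prod_encode (i, v)"

definition copy_index :: "nat \<Rightarrow> nat" where
  "copy_index x = fst (prod_decode x)"

lemma copy_index_copy [simp]: "copy_index (copy i v) = i"
  unfolding copy_index_def copy_def by simp

lemma copy_eq_iff [simp]: "copy i u = copy i' v \<longleftrightarrow> i = i' \<and> u = v"
  unfolding copy_def by simp

lemma inj_copy: "inj (copy i)"
  by (rule injI) simp

lemma inj_image_copy: "inj (image (copy i))"
  using inj_copy by (simp add: inj_on_def inj_image_eq_iff)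

primrec copies_vertices :: "nat set \<Rightarrow> nat \<Rightarrow> nat set" where
  "copies_vertices V 0 = {}"
| "copies_vertices V (Suc m) = copy m ` V \<union> copies_vertices V m"

primrec copies_edges :: "nat set set \<Rightarrow> nat \<Rightarrow> nat set set" where
  "copies_edges E 0 = {}"
| "copies_edges E (Suc m) = image (copy m) ` E \<union> copies_edges E m"

lemma copy_index_copies_vertices: "x \<in> copies_vertices V m \<Longrightarrow> copy_index x < m"
  by (induction m) auto

lemma copy_index_copies_edges: "e \<in> copies_edges E m \<Longrightarrow> x \<in> e \<Longrightarrow> copy_index x < m"
  by (induction m) auto

lemma finite_copies_vertices: "finite V \<Longrightarrow> finite (copies_vertices V m)"
  by (induction m) auto

lemma finite_copies_edges: "finite E \<Longrightarrow> finite (copies_edges E m)"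
  by (induction m) auto

lemma card_copies_vertices:
  assumes "finite V"
  shows "card (copies_vertices V m) = m * card V"
proof (induction m)
  case (Suc m)
  have "copy m ` V \<inter> copies_vertices V m = {}"
    using copy_index_copies_vertices by fastforce
  then have "card (copies_vertices V (Suc m)) = card (copy m ` V) + card (copies_vertices V m)"
    using card_Un_disjoint finite_copies_vertices assms by (metis copies_vertices.simps(2) finite_imageI)
  then show ?case
    using Suc card_image[OF inj_on_subset[OF inj_copy]] by simp
qed simp

lemma copies_vertices_Un: "copies_vertices A m \<union> copies_vertices B m = copies_vertices (A \<union> B) m"
  by (induction m) auto

lemma copies_vertices_disjoint:
  assumes "A \<inter> B = {}"
  shows "copies_vertices A m \<inter> copies_vertices B m = {}"
proof (induction m)
  case (Suc m)
  have "copy m ` A \<inter> copy m ` B = {}"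
    using assms by auto
  moreover have "copy m ` A \<inter> copies_vertices B m = {}" "copies_vertices A m \<inter> copy m ` B = {}"
    using copy_index_copies_vertices by fastforce+
  ultimately show ?case
    using Suc by auto
qed simp

lemma simple_graph_copies:
  assumes "simple_graph V E"
  shows "simple_graph (copies_vertices V m) (copies_edges E m)"
proof -
  have "e \<subseteq> copies_vertices V m \<and> card e = 2" if "e \<in> copies_edges E m" for e
    using that
  proof (induction m)
    case (Suc m)
    show ?case
    proof (cases "e \<in> copies_edges E m")
      case False
      then obtain f where "f \<in> E" "e = copy m ` f"
        using Suc.prems by auto
      moreover have "f \<subseteq> V" "card f = 2"
        using assms \<open>f \<in> E\<close> unfolding simple_graph_def by auto
      ultimately show ?thesis
        using card_image[OF inj_on_subset[OF inj_copy]] by auto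
    qed (use Suc.IH in auto)
  qed simp
  then show ?thesis
    using assms finite_copies_vertices unfolding simple_graph_def by blast
qed

lemma bipartite_copies:
  assumes "bipartite V E"
  shows "bipartite (copies_vertices V m) (copies_edges E m)"
proof -
  obtain A B where AB: "A \<union> B = V" "A \<inter> B = {}" "\<forall>e\<in>E. \<exists>a\<in>A. \<exists>b\<in>B. e = {a, b}"
    using assms unfolding bipartite_def by blast
  have "\<exists>a\<in>copies_vertices A m. \<exists>b\<in>copies_vertices B m. e = {a, b}" if "e \<in> copies_edges E m" for e
    using that
  proof (induction m)
    case (Suc m)
    show ?case
    proof (cases "e \<in> copies_edges E m")
      case False
      then obtain a b where "a \<in> A" "b \<in> B" "e = {copy m a, copy m b}"
        using Suc.prems AB(3) by auto
      then show ?thesis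
        by auto
    qed (use Suc.IH in auto)
  qed simp
  moreover have "copies_vertices A m \<union> copies_vertices B m = copies_vertices V m"
    using copies_vertices_Un[of A m B] AB(1) by simp
  ultimately show ?thesis
    unfolding bipartite_def using copies_vertices_disjoint[OF AB(2)]
    by (intro exI[of _ "copies_vertices A m"] exI[of _ "copies_vertices B m"]) simp
qed

lemma regular_copies:
  assumes "regular d V E"
  shows "regular d (copies_vertices V m) (copies_edges E m)"
  unfolding regular_def
proof (induction m)
  case (Suc m)
  show ?case
  proof
    fix v assume v: "v \<in> copies_vertices V (Suc m)"
    show "degree (copies_edges E (Suc m)) v = d"
    proof (cases "v \<in> copies_vertices V m")
      case True
      then have "{e \<in> copies_edges E (Suc m). v \<in> e} = {e \<in> copies_edges E m. v \<in> e}"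
        using copy_index_copies_vertices by fastforce
      then show ?thesis
        using Suc True unfolding degree_def by simp
    next
      case False
      then obtain u where u: "u \<in> V" "v = copy m u"
        using v by auto
      have "{e \<in> copies_edges E (Suc m). v \<in> e} = image (copy m) ` {e \<in> E. u \<in> e}"
        using copy_index_copies_edges[of _ E m v] u by fastforce
      then have "degree (copies_edges E (Suc m)) v = degree E u"
        unfolding degree_def using card_image[OF inj_on_subset[OF inj_image_copy]] by simp
      then show ?thesis
        using assms u unfolding regular_def by simp
    qed
  qed
qed simp

section \<open>Matchings in disjoint copies\<close>

lemma num_matchings_empty: "num_matchings {} j = (if j = 0 then 1 else 0)"
proof -
  have matchings: "{M. matching {} M \<and> card M = j} = (if j = 0 then {{}} else {})"
    unfolding matching_def by auto
  show ?thesis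
    unfolding num_matchings_def matchings by simp
qed

lemma num_matchings_0:
  assumes "finite E"
  shows "num_matchings E 0 = 1"
proof -
  have "{M. matching E M \<and> card M = 0} = {{}}"
    using assms finite_subset unfolding matching_def by fastforce
  then show ?thesis
    unfolding num_matchings_def by simp
qed

lemma num_matchings_pos_Suc:
  assumes "finite E" "0 < num_matchings E (Suc j)"
  shows "0 < num_matchings E j"
proof -
  obtain M where M: "matching E M" "card M = Suc j"
    using assms(2) unfolding num_matchings_def by (metis (mono_tags, lifting) card.empty less_irrefl empty_Collect_eq)
  then obtain x where "x \<in> M"
    by fastforce
  then have "M - {x} \<in> matchings_of_size E j"
    using M unfolding matchings_of_size_def matching_def by (auto simp: card_Diff_singleton_if)
  then show ?thesis
    using finite_matchings_of_size[OF assms(1)] unfolding matchings_of_size_def num_matchings_def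
    by (metis card_gt_0_iff empty_iff)
qed

lemma num_matchings_eq_0_large:
  assumes "simple_graph V E" "card V = 2 * n" "n < j"
  shows "num_matchings E j = 0"
proof -
  have "card M \<le> n" if "matching E M" for M
  proof -
    have "pairwise disjnt M" "\<forall>e\<in>M. e \<subseteq> V \<and> card e = 2"
      using that assms(1) unfolding matching_iff_pairwise_disjnt simple_graph_def by auto
    then have "2 * card M = card (\<Union>M)"
      using card_Union_pairwise_disjnt_2sets by metis
    also have "\<dots> \<le> card V"
      using assms(1) \<open>\<forall>e\<in>M. e \<subseteq> V \<and> card e = 2\<close> unfolding simple_graph_def
      by (intro card_mono) auto
    finally show ?thesis
      using assms(2) by linarith
  qed
  then have "{M. matching E M \<and> card M = j} = {}"
    using assms(3) by fastforce
  then show ?thesis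
    unfolding num_matchings_def by (metis card.empty)
qed

lemma num_matchings_image_le:
  assumes "inj f" "finite E"
  shows "num_matchings (image f ` E) j \<le> num_matchings E j"
proof -
  have injF: "inj (image f)"
    using assms(1) by (simp add: inj_on_def inj_image_eq_iff)
  have "matchings_of_size (image f ` E) j \<subseteq> image (image f) ` matchings_of_size E j"
  proof
    fix M' assume M': "M' \<in> matchings_of_size (image f ` E) j"
    have M'E: "M' \<subseteq> image f ` E" "pairwise disjnt M'"
      using M' unfolding matchings_of_size_def matching_iff_pairwise_disjnt by auto
    define M where "M = {e \<in> E. f ` e \<in> M'}"
    have img: "image f ` M = M'"
      using M'E(1) unfolding M_def by blast
    have "disjnt e g" if "e \<in> M" "g \<in> M" "e \<noteq> g" for e g
    proof -
      have "f ` e \<noteq> f ` g"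
        using that(3) injF by (meson injD)
      then have "disjnt (f ` e) (f ` g)"
        using M'E(2) that(1,2) unfolding M_def by (auto dest: pairwiseD)
      then show ?thesis
        by (simp add: disjnt_def image_Int[OF assms(1), symmetric])
    qed
    then have "matching E M"
      unfolding matching_iff_pairwise_disjnt M_def pairwise_def by auto
    moreover have "card M = j"
      using M' img card_image[OF inj_on_subset[OF injF]] unfolding matchings_of_size_def by auto
    ultimately show "M' \<in> image (image f) ` matchings_of_size E j"
      using img unfolding matchings_of_size_def by blast
  qed
  then have "card (matchings_of_size (image f ` E) j) \<le> card (matchings_of_size E j)"
    using finite_matchings_of_size[OF assms(2)] by (meson card_image_le card_mono finite_imageI order_trans)
  then show ?thesis
    unfolding matchings_of_size_def num_matchings_def .
qed

lemma num_matchings_Un_le: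
  assumes "finite E1" "finite E2" "\<Union>E1 \<inter> \<Union>E2 = {}" "{} \<notin> E1"
  shows "num_matchings (E1 \<union> E2) K \<le> (\<Sum>j\<le>K. num_matchings E1 j * num_matchings E2 (K - j))"
proof -
  let ?M = "matchings_of_size"
  have "?M (E1 \<union> E2) K \<subseteq> (\<Union>j\<le>K. (\<lambda>(A, B). A \<union> B) ` (?M E1 j \<times> ?M E2 (K - j)))"
  proof
    fix M assume M: "M \<in> ?M (E1 \<union> E2) K"
    have Mm: "M \<subseteq> E1 \<union> E2" "pairwise disjnt M" "card M = K"
      using M unfolding matchings_of_size_def matching_iff_pairwise_disjnt by auto
    have "finite M"
      using Mm(1) assms(1,2) finite_subset by blast
    then have card_M: "card M = card (M \<inter> E1) + card (M - E1)"
      by (rule card_Int_Diff)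
    moreover have "pairwise disjnt (M \<inter> E1)" "pairwise disjnt (M - E1)"
      using pairwise_subset[OF Mm(2)] by blast+
    ultimately have "(M \<inter> E1, M - E1) \<in> ?M E1 (card (M \<inter> E1)) \<times> ?M E2 (K - card (M \<inter> E1))"
      using Mm
      unfolding matchings_of_size_def matching_iff_pairwise_disjnt by auto
    moreover have "M = (\<lambda>(A, B). A \<union> B) (M \<inter> E1, M - E1)"
      by auto
    moreover have "card (M \<inter> E1) \<le> K"
      using Mm(3) card_M by simp
    ultimately show "M \<in> (\<Union>j\<le>K. (\<lambda>(A, B). A \<union> B) ` (?M E1 j \<times> ?M E2 (K - j)))"
      by blast
  qed
  then have "num_matchings (E1 \<union> E2) K \<le> card (\<Union>j\<le>K. (\<lambda>(A, B). A \<union> B) ` (?M E1 j \<times> ?M E2 (K - j)))"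
    unfolding num_matchings_def matchings_of_size_def[symmetric]
    by (intro card_mono) (simp_all add: finite_matchings_of_size assms(1,2))
  also have "\<dots> \<le> (\<Sum>j\<le>K. card ((\<lambda>(A, B). A \<union> B) ` (?M E1 j \<times> ?M E2 (K - j))))"
    by (rule card_UN_le) simp
  also have "\<dots> \<le> (\<Sum>j\<le>K. card (?M E1 j \<times> ?M E2 (K - j)))"
    by (intro sum_mono card_image_le) (use finite_matchings_of_size assms(1,2) in blast)
  also have "\<dots> = (\<Sum>j\<le>K. num_matchings E1 j * num_matchings E2 (K - j))"
    unfolding num_matchings_def matchings_of_size_def by (simp add: card_cartesian_product)
  finally show ?thesis .
qed

lemma num_matchings_copies_Suc_le:
  assumes "finite E" "\<forall>e\<in>E. card e = 2"
  shows "num_matchings (copies_edges E (Suc m)) K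
    \<le> (\<Sum>j\<le>K. num_matchings E j * num_matchings (copies_edges E m) (K - j))"
proof -
  have disj: "\<Union>(image (copy m) ` E) \<inter> \<Union>(copies_edges E m) = {}"
    using copy_index_copies_edges by fastforce
  have "{} \<notin> image (copy m) ` E"
  proof
    assume "{} \<in> image (copy m) ` E"
    then obtain e where "e \<in> E" "e = {}"
      by (metis image_is_empty imageE)
    then show False
      using assms(2) by force
  qed
  then have "num_matchings (copies_edges E (Suc m)) K
      \<le> (\<Sum>j\<le>K. num_matchings (image (copy m) ` E) j * num_matchings (copies_edges E m) (K - j))"
    unfolding copies_edges.simps
    by (rule num_matchings_Un_le[OF finite_imageI[OF assms(1)] finite_copies_edges[OF assms(1)] disj])
  also have "\<dots> \<le> (\<Sum>j\<le>K. num_matchings E j * num_matchings (copies_edges E m) (K - j))"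
    using num_matchings_image_le[OF inj_copy assms(1)] by (intro sum_mono mult_right_mono) auto
  finally show ?thesis .
qed

lemma num_matchings_copies_le_exp:
  assumes "finite E" "\<forall>e\<in>E. card e = 2" "\<forall>j>n. num_matchings E j = 0"
    and bound: "\<forall>j. real (num_matchings E j) \<le> A * exp (s * (real j - real k))" and "0 \<le> A"
  shows "real (num_matchings (copies_edges E m) K)
    \<le> ((real n + 1) * A) ^ m * exp (s * (real K - real m * real k))"
proof (induction m arbitrary: K)
  case 0
  show ?case
    by (simp add: num_matchings_empty)
next
  case (Suc m)
  define T where "T = A * ((real n + 1) * A) ^ m * exp (s * (real K - real (Suc m) * real k))"
  have term_le: "real (num_matchings E j) * real (num_matchings (copies_edges E m) (K - j))
      \<le> (if j \<le> n then T else 0)" if "j \<le> K" for j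
  proof (cases "j \<le> n")
    case True
    have "real (num_matchings E j) * real (num_matchings (copies_edges E m) (K - j))
        \<le> (A * exp (s * (real j - real k)))
          * (((real n + 1) * A) ^ m * exp (s * (real (K - j) - real m * real k)))"
      using bound Suc.IH[of "K - j"] assms(5) by (intro mult_mono) auto
    also have "\<dots> = T"
      using that unfolding T_def by (simp add: of_nat_diff algebra_simps flip: exp_add)
    finally show ?thesis
      using True by simp
  qed (use assms(3) in simp)
  have "real (num_matchings (copies_edges E (Suc m)) K)
      \<le> (\<Sum>j\<le>K. real (num_matchings E j) * real (num_matchings (copies_edges E m) (K - j)))"
    using num_matchings_copies_Suc_le[OF assms(1,2)] by (simp flip: of_nat_mult of_nat_sum)
  also have "\<dots> \<le> (\<Sum>j\<le>K. if j \<le> n then T else 0)"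
    using term_le by (intro sum_mono) simp
  also have "\<dots> = real (card ({..K} \<inter> {..n})) * T"
    by (simp add: sum.If_cases Int_def atMost_def)
  also have "\<dots> \<le> (real n + 1) * T"
  proof -
    have "card ({..K} \<inter> {..n}) \<le> card {..n}"
      by (intro card_mono) auto
    then show ?thesis
      using assms(5) unfolding T_def by (intro mult_right_mono) auto
  qed
  also have "\<dots> = ((real n + 1) * A) ^ Suc m * exp (s * (real K - real (Suc m) * real k))"
    unfolding T_def by (simp add: algebra_simps)
  finally show ?case .
qed

lemma num_matchings_copies_eq_0:
  assumes "finite E" "\<forall>e\<in>E. card e = 2" "\<forall>j\<ge>k. num_matchings E j = 0" "m * (k - 1) < K"
  shows "num_matchings (copies_edges E m) K = 0"
  using assms(4)
proof (induction m arbitrary: K)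
  case (Suc m)
  have "num_matchings E j * num_matchings (copies_edges E m) (K - j) = 0" if "j \<le> K" for j
  proof (cases "k \<le> j")
    case False
    moreover have "Suc m * (k - 1) = m * (k - 1) + (k - 1)"
      by simp
    ultimately have "m * (k - 1) < K - j"
      using Suc.prems that by linarith
    then show ?thesis
      using Suc.IH by simp
  qed (use assms(3) in simp)
  then have "(\<Sum>j\<le>K. num_matchings E j * num_matchings (copies_edges E m) (K - j)) = 0"
    by (intro sum.neutral) simp
  then show ?case
    using num_matchings_copies_Suc_le[OF assms(1,2), of m K] by linarith
qed (simp add: num_matchings_empty)

text \<open>Log-concavity puts the matching numbers of G below a geometric sequence through m_k(G),
  so every term of the convolution giving m_{mk} of m copies of G is at most m_k(G)^m, and there
  are at most (n + 1)^m terms.\<close>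

lemma num_matchings_copies_le:
  assumes "simple_graph V E" "card V = 2 * n"
  shows "num_matchings (copies_edges E m) (m * k) \<le> ((n + 1) * num_matchings E k) ^ m"
proof -
  have fE: "finite E" and c2: "\<forall>e\<in>E. card e = 2"
    using assms(1) unfolding simple_graph_def by (auto intro: finite_subset[of E "Pow V"])
  let ?a = "num_matchings E"
  have down: "0 < ?a j" if "0 < ?a (Suc j)" for j
    using num_matchings_pos_Suc[OF fE that] .
  consider "m = 0" | "k = 0" | "0 < m" "0 < k" "?a k = 0" | "0 < k" "0 < ?a k"
    by blast
  then show ?thesis
  proof cases
    case 1
    then show ?thesis
      by (simp add: num_matchings_empty)
  next
    case 2
    then show ?thesis
      by (simp add: num_matchings_0[OF fE] num_matchings_0[OF finite_copies_edges[OF fE]])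
  next
    case 3
    have "?a j = 0" if "k \<le> j" for j
      using that by (induction rule: dec_induct) (use 3 down in fastforce)+
    then have "num_matchings (copies_edges E m) (m * k) = 0"
      using 3 by (intro num_matchings_copies_eq_0[OF fE c2]) auto
    then show ?thesis
      by simp
  next
    case 4
    define s where "s = ln (?a k) - ln (?a (k - 1))"
    have "real (?a j) \<le> real (?a k) * exp (s * (real j - real k))" for j
      unfolding s_def using 4
      by (intro log_concave_le_exp_secant[OF num_matchings_log_concave[OF fE c2] down]) auto
    moreover have "\<forall>j>n. ?a j = 0"
      using num_matchings_eq_0_large[OF assms] by blast
    ultimately have "real (num_matchings (copies_edges E m) (m * k))
        \<le> ((real n + 1) * real (?a k)) ^ m * exp (s * (real (m * k) - real m * real k))"
      by (intro num_matchings_copies_le_exp[OF fE c2]) auto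
    also have "\<dots> = real (((n + 1) * ?a k) ^ m)"
      by (simp add: algebra_simps)
    finally show ?thesis
      by (simp only: of_nat_le_iff)
  qed
qed

lemma ln_of_nat_mono: "x \<le> y \<Longrightarrow> ln (real x) \<le> ln (real y)"
  by (cases "x = 0"; cases "y = 0") (auto intro!: ln_ge_zero)

lemma ln_of_nat_power:
  assumes "0 < m"
  shows "ln (real (x ^ m)) = real m * ln (real x)"
proof (cases "x = 0")
  case False
  then show ?thesis
    by (simp add: ln_realpow)
qed (use assms in \<open>simp add: zero_power\<close>)

lemma ln_Suc_mult_le:
  assumes "0 < n"
  shows "ln (real ((n + 1) * a)) \<le> ln (real (2 * n)) + ln (real a)"
proof (cases "a = 0")
  case True
  then show ?thesis
    using assms by simp
next
  case False
  have "ln (real ((n + 1) * a)) = ln (real (n + 1)) + ln (real a)"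
    using False by (simp only: of_nat_mult ln_mult) simp
  also have "ln (real (n + 1)) \<le> ln (real (2 * n))"
    using assms by simp
  finally show ?thesis
    by simp
qed

lemma ln_num_matchings_copies_le:
  assumes "simple_graph V E" "card V = 2 * n" "0 < m"
  shows "ln (real (num_matchings (copies_edges E m) (m * k))) / real (card (copies_vertices V m))
    \<le> ln (real ((n + 1) * num_matchings E k)) / real (card V)"
proof -
  have V: "finite V"
    using assms(1) unfolding simple_graph_def by simp
  have "ln (real (num_matchings (copies_edges E m) (m * k))) \<le> ln (real (((n + 1) * num_matchings E k) ^ m))"
    using num_matchings_copies_le[OF assms(1,2)] by (rule ln_of_nat_mono)
  also have "\<dots> = real m * ln (real ((n + 1) * num_matchings E k))"
    using ln_of_nat_power[OF assms(3)] .
  finally have "ln (real (num_matchings (copies_edges E m) (m * k))) / (real m * real (card V))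
      \<le> real m * ln (real ((n + 1) * num_matchings E k)) / (real m * real (card V))"
    by (rule divide_right_mono) simp
  then show ?thesis
    using card_copies_vertices[OF V, of m] assms(3) by simp
qed

theorem corollary3p2:
  fixes d :: nat
  assumes "d > 0"
    and "\<exists>\<epsilon> :: nat \<Rightarrow> real. \<epsilon> \<longlonglongrightarrow> 0 \<and>
      (\<forall>(V :: nat set) (E :: nat set set) (n :: nat) (k :: nat).
         simple_graph V E \<and> bipartite V E \<and> regular d V E \<and> card V = 2 * n \<and> k \<le> n \<longrightarrow>
         ln (real (num_matchings E k)) / real (card V)
           \<ge> GG d (real k / real n) - \<epsilon> (card V))"
  shows "\<forall>(V :: nat set) (E :: nat set set) (n :: nat) (k :: nat).
         simple_graph V E \<and> bipartite V E \<and> regular d V E \<and> card V = 2 * n \<and> k \<le> n \<longrightarrow>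
         ln (real (num_matchings E k)) / real (card V)
           \<ge> GG d (real k / real n) - ln (real (card V)) / real (card V)"
proof (intro allI impI)
  fix V :: "nat set" and E :: "nat set set" and n k :: nat
  assume G: "simple_graph V E \<and> bipartite V E \<and> regular d V E \<and> card V = 2 * n \<and> k \<le> n"
  obtain \<epsilon> :: "nat \<Rightarrow> real" where \<epsilon>: "\<epsilon> \<longlonglongrightarrow> 0" and hyp: "\<forall>(V :: nat set) E n k.
      simple_graph V E \<and> bipartite V E \<and> regular d V E \<and> card V = 2 * n \<and> k \<le> n \<longrightarrow>
      GG d (real k / real n) - \<epsilon> (card V) \<le> ln (real (num_matchings E k)) / real (card V)"
    using assms(2) by blast
  let ?bound = "ln (real ((n + 1) * num_matchings E k)) / real (card V)"
  show "GG d (real k / real n) - ln (real (card V)) / real (card V) \<le> ln (real (num_matchings E k)) / real (card V)"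
  proof (cases "n = 0")
    case True
    then show ?thesis
      using G by (simp add: GG_def xln_def)
  next
    case False
    have V: "finite V"
      using G unfolding simple_graph_def by simp
    have copies: "GG d (real k / real n) - \<epsilon> (2 * (m * n)) \<le> ?bound" if "0 < m" for m
      using hyp[rule_format, of "copies_vertices V m" "copies_edges E m" "m * n" "m * k"] G that
        simple_graph_copies bipartite_copies regular_copies card_copies_vertices[OF V, of m]
        ln_num_matchings_copies_le[of V E n m k]
      by (auto simp: ac_simps)
    have "(\<lambda>m. \<epsilon> (2 * (m * n))) \<longlonglongrightarrow> 0"
      using LIMSEQ_subseq_LIMSEQ[OF \<epsilon>, of "\<lambda>m. 2 * (m * n)"] False
      by (simp add: strict_mono_def o_def)
    then have "(\<lambda>m. GG d (real k / real n) - \<epsilon> (2 * (m * n))) \<longlonglongrightarrow> GG d (real k / real n)"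
      using tendsto_diff[OF tendsto_const] by fastforce
    then have "GG d (real k / real n) \<le> ?bound"
      by (rule LIMSEQ_le_const2) (use copies in \<open>auto intro: exI[of _ 1]\<close>)
    also have "?bound \<le> (ln (real (card V)) + ln (real (num_matchings E k))) / real (card V)"
      using ln_Suc_mult_le[of n "num_matchings E k"] G False by (intro divide_right_mono) auto
    finally show ?thesis
      by (simp add: add_divide_distrib)
  qed
qed

end
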